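(* Let $k\ge 1$ and let $G$ be a graph. Then $G$ is a $k$-OR-PCG, i.e. $G=\text{OR-PCG}_k(T_1,\ldots,T_k,I_1,\ldots,I_k)$ for some trees $T_1,\ldots,T_k$ with common leaf set $V(G)$ and intervals $I_1,\ldots,I_k$, if and only if there exist trees $T''_1,\ldots,T''_k$ with common leaf set $V(G)$ and a single interval $I$ of nonnegative reals such that $G=\text{OR-PCG}_k(T''_1,\ldots,T''_k,I,\ldots,I)$. The same equivalence holds with "OR-PCG" replaced by "AND-PCG" throughout.
   Context: All trees are unrooted with edges weighted by nonnegative real numbers; for leaves $u,v$ of a tree $T$, $d_T(u,v)$ is the sum of the weights on the unique path between $u$ and $v$. Given trees $T_1,\ldots,T_k$ with the same leaf set $L$ and (not necessarily disjoint) intervals $I_1,\ldots,I_k$ of nonnegative reals, $\text{OR-PCG}_k(T_1,\ldots,T_k,I_1,\ldots,I_k)$ is the graph with vertex set $L$ in which $\{u,v\}$ is an edge iff $d_{T_i}(u,v)\in I_i$ for at least one $i$; $\text{AND-PCG}_k(T_1,\ldots,T_k,I_1,\ldots,I_k)$ is the graph with vertex set $L$ in which $\{u,v\}$ is an edge iff $d_{T_i}(u,v)\in I_i$ for all $i$. A graph is a $k$-OR-PCG (resp. $k$-AND-PCG) if it equals such a graph for some choice of trees and intervals. *)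

theory Defs
  imports "HOL-Analysis.Analysis"
begin

record 'v wtree =
  tverts :: "'v set"
  tedges :: "'v set set"
  tweight :: "'v set \<Rightarrow> real"

definition is_tpath :: "'v wtree \<Rightarrow> 'v list \<Rightarrow> 'v \<Rightarrow> 'v \<Rightarrow> bool" where
  "is_tpath T p u v \<longleftrightarrow> p \<noteq> [] \<and> hd p = u \<and> last p = v \<and> distinct p \<and>
     set p \<subseteq> tverts T \<and>
     (\<forall>i. Suc i < length p \<longrightarrow> {p ! i, p ! Suc i} \<in> tedges T)"

definition is_wtree :: "'v wtree \<Rightarrow> bool" where
  "is_wtree T \<longleftrightarrow> finite (tverts T) \<and> tverts T \<noteq> {} \<and>
     tedges T \<subseteq> {{x, y} | x y. x \<in> tverts T \<and> y \<in> tverts T \<and> x \<noteq> y} \<and>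
     (\<forall>e\<in>tedges T. 0 \<le> tweight T e) \<and>
     (\<forall>u\<in>tverts T. \<forall>v\<in>tverts T. \<exists>!p. is_tpath T p u v)"

text \<open>Leaves: vertices of degree at most one (degree exactly one unless the tree
is a single vertex).\<close>
definition tleaves :: "'v wtree \<Rightarrow> 'v set" where
  "tleaves T = {v \<in> tverts T. card {e \<in> tedges T. v \<in> e} \<le> 1}"

definition tdist :: "'v wtree \<Rightarrow> 'v \<Rightarrow> 'v \<Rightarrow> real" where
  "tdist T u v = (let p = (THE p. is_tpath T p u v) in
     (\<Sum>i<length p - 1. tweight T {p ! i, p ! Suc i}))"

definition nonneg_interval :: "real set \<Rightarrow> bool" where
  "nonneg_interval I \<longleftrightarrow> is_interval I \<and> I \<subseteq> {0..}"

text \<open>The trees have vertex type 'a + nat; the leaf u of the graph is Inl u, and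
further (internal) vertices are available in unlimited supply.\<close>
definition tree_on_leaves :: "'a set \<Rightarrow> ('a + nat) wtree \<Rightarrow> bool" where
  "tree_on_leaves V T \<longleftrightarrow> is_wtree T \<and> tleaves T = Inl ` V"

definition or_pcg :: "'a set \<Rightarrow> nat \<Rightarrow> (nat \<Rightarrow> ('a + nat) wtree) \<Rightarrow> (nat \<Rightarrow> real set) \<Rightarrow> 'a set set" where
  "or_pcg V k T I = {{u, v} | u v. u \<in> V \<and> v \<in> V \<and> u \<noteq> v \<and>
      (\<exists>i<k. tdist (T i) (Inl u) (Inl v) \<in> I i)}"

definition and_pcg :: "'a set \<Rightarrow> nat \<Rightarrow> (nat \<Rightarrow> ('a + nat) wtree) \<Rightarrow> (nat \<Rightarrow> real set) \<Rightarrow> 'a set set" where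
  "and_pcg V k T I = {{u, v} | u v. u \<in> V \<and> v \<in> V \<and> u \<noteq> v \<and>
      (\<forall>i<k. tdist (T i) (Inl u) (Inl v) \<in> I i)}"

text \<open>A simple graph is given by a vertex set V and an edge set E of 2-subsets of V.\<close>
definition is_k_or_pcg :: "nat \<Rightarrow> 'a set \<Rightarrow> 'a set set \<Rightarrow> bool" where
  "is_k_or_pcg k V E \<longleftrightarrow> (\<exists>T I. (\<forall>i<k. tree_on_leaves V (T i) \<and> nonneg_interval (I i)) \<and>
      E = or_pcg V k T I)"

definition is_k_and_pcg :: "nat \<Rightarrow> 'a set \<Rightarrow> 'a set set \<Rightarrow> bool" where
  "is_k_and_pcg k V E \<longleftrightarrow> (\<exists>T I. (\<forall>i<k. tree_on_leaves V (T i) \<and> nonneg_interval (I i)) \<and>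
      E = and_pcg V k T I)"

end

theory Submission
  imports Defs
begin

(* Multiplying all edge weights of a tree by \<alpha> > 0 and adding \<beta> \<ge> 0 to the weight of
   every pendant edge turns each leaf-to-leaf distance d into \<alpha> d + 2\<beta>, because a path
   between two distinct leaves passes through pendant edges exactly at its two ends.
   The distances of one tree form a finite set D, and the pairs whose distance lies in
   the interval I_i are exactly those whose distance lies in some open interval (a, b)
   that avoids the rest of D.  For every small enough \<epsilon> > 0 an affine map
   d \<mapsto> \<alpha> d + c with \<alpha> > 0 and c \<ge> 0 sends (a, b) onto (1, 1 + \<epsilon>); taking one \<epsilon>
   that works for all k trees gives a single common interval. *)

definition affine_reweight :: "real \<Rightarrow> real \<Rightarrow> 'v wtree \<Rightarrow> 'v wtree" where
  "affine_reweight \<alpha> \<beta> T =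
     T\<lparr>tweight := (\<lambda>e. \<alpha> * tweight T e + \<beta> * real (card (e \<inter> tleaves T)))\<rparr>"

lemma is_tpath_affine_reweight [simp]: "is_tpath (affine_reweight \<alpha> \<beta> T) = is_tpath T"
  unfolding is_tpath_def affine_reweight_def by (intro ext) simp

lemma tleaves_affine_reweight [simp]: "tleaves (affine_reweight \<alpha> \<beta> T) = tleaves T"
  by (simp add: tleaves_def affine_reweight_def)

lemma is_wtree_affine_reweight:
  assumes "is_wtree T" "0 \<le> \<alpha>" "0 \<le> \<beta>"
  shows "is_wtree (affine_reweight \<alpha> \<beta> T)"
  using assms unfolding is_wtree_def is_tpath_affine_reweight
  by (simp add: affine_reweight_def)

lemma finite_tedges:
  assumes "is_wtree T"
  shows "finite (tedges T)"
proof -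
  have "tedges T \<subseteq> Pow (tverts T)" "finite (tverts T)"
    using assms unfolding is_wtree_def by auto
  then show ?thesis by (meson finite_Pow_iff finite_subset)
qed

lemma the_tpath:
  assumes "is_wtree T" "is_tpath T p u v"
  shows "(THE q. is_tpath T q u v) = p"
proof -
  have "u \<in> tverts T" "v \<in> tverts T"
    using assms(2) unfolding is_tpath_def by (auto dest: hd_in_set last_in_set)
  with assms(1) have "\<exists>!q. is_tpath T q u v"
    unfolding is_wtree_def by blast
  then show ?thesis
    using assms(2) by (rule the1_equality)
qed

lemma tdist_tpath:
  assumes "is_wtree T" "is_tpath T p u v"
  shows "tdist T u v = (\<Sum>i<length p - 1. tweight T {p ! i, p ! Suc i})"
  using assms by (simp add: tdist_def the_tpath)

lemma tpath_inner_not_leaf: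
  assumes T: "is_wtree T" and p: "is_tpath T p u v" and j: "0 < j" "j < length p - 1"
  shows "p ! j \<notin> tleaves T"
proof
  assume leaf: "p ! j \<in> tleaves T"
  let ?e1 = "{p ! (j - 1), p ! j}" and ?e2 = "{p ! j, p ! Suc j}"
  have "\<And>i. Suc i < length p \<Longrightarrow> {p ! i, p ! Suc i} \<in> tedges T"
    using p unfolding is_tpath_def by blast
  from this[of "j - 1"] this[of j] have edges: "?e1 \<in> tedges T" "?e2 \<in> tedges T"
    using j by simp_all
  have "p ! (j - 1) \<noteq> p ! Suc j"
    using p j unfolding is_tpath_def by (simp add: nth_eq_iff_index_eq)
  then have "?e1 \<noteq> ?e2" by (auto simp: doubleton_eq_iff)
  then have "card {?e1, ?e2} \<le> card {e \<in> tedges T. p ! j \<in> e}"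
    using edges finite_tedges[OF T] by (intro card_mono) auto
  with \<open>?e1 \<noteq> ?e2\<close> leaf show False
    unfolding tleaves_def by simp
qed

lemma tpath_leaf_incidences:
  assumes T: "is_wtree T" and p: "is_tpath T p u v"
    and leaves: "u \<in> tleaves T" "v \<in> tleaves T" and "u \<noteq> v"
  shows "(\<Sum>i<length p - 1. real (card ({p ! i, p ! Suc i} \<inter> tleaves T))) = 2"
proof -
  let ?L = "tleaves T" and ?n = "length p"
  define f where "f i = (of_bool (p ! i \<in> ?L) :: real)" for i
  have ends: "p \<noteq> []" "p ! 0 = u" "p ! (?n - 1) = v" "distinct p"
    using p unfolding is_tpath_def by (auto simp: hd_conv_nth last_conv_nth)
  then have n: "?n \<ge> 2"
    using \<open>u \<noteq> v\<close> by (metis One_nat_def Suc_1 diff_is_0_eq not_less_eq_eq)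
  have card_edge: "real (card ({p ! i, p ! Suc i} \<inter> ?L)) = f i + f (Suc i)" if "i < ?n - 1" for i
  proof -
    have "p ! i \<noteq> p ! Suc i" using ends that by (simp add: nth_eq_iff_index_eq)
    then show ?thesis unfolding f_def by (cases "p ! i \<in> ?L"; cases "p ! Suc i \<in> ?L") auto
  qed
  have "f i = of_bool (i = 0)" if "i < ?n - 1" for i
    using tpath_inner_not_leaf[OF T p, of i] that ends leaves unfolding f_def by auto
  then have first: "(\<Sum>i<?n - 1. f i) = 1"
    using n by simp
  have "f (Suc i) = of_bool (i = ?n - 2)" if "i < ?n - 1" for i
    using tpath_inner_not_leaf[OF T p, of "Suc i"] that ends leaves n unfolding f_def
    by (cases "i = ?n - 2") (auto simp: Suc_diff_Suc numeral_2_eq_2)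
  then have second: "(\<Sum>i<?n - 1. f (Suc i)) = 1"
    using n by simp
  show ?thesis
    using first second by (simp add: card_edge sum.distrib)
qed

lemma tdist_affine_reweight:
  assumes T: "is_wtree T" and leaves: "u \<in> tleaves T" "v \<in> tleaves T" "u \<noteq> v"
  shows "tdist (affine_reweight \<alpha> \<beta> T) u v = \<alpha> * tdist T u v + 2 * \<beta>"
proof -
  obtain p where p: "is_tpath T p u v"
    using T leaves unfolding is_wtree_def tleaves_def by blast
  have "tdist (affine_reweight \<alpha> \<beta> T) u v
      = (\<Sum>i<length p - 1. \<alpha> * tweight T {p ! i, p ! Suc i}
           + \<beta> * real (card ({p ! i, p ! Suc i} \<inter> tleaves T)))"
    unfolding tdist_def is_tpath_affine_reweight using T p
    by (simp add: the_tpath affine_reweight_def)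
  also have "\<dots> = \<alpha> * tdist T u v + 2 * \<beta>"
    using tpath_leaf_incidences[OF T p leaves] tdist_tpath[OF T p]
    by (simp add: sum.distrib sum_distrib_left[symmetric])
  finally show ?thesis .
qed

lemma finite_gap_below:
  fixes D :: "real set"
  assumes "finite D"
  obtains a where "a < m" "\<And>d. d \<in> D \<Longrightarrow> d < m \<Longrightarrow> d < a"
proof -
  define M where "M = Max (insert (m - 1) {d \<in> D. d < m})"
  have fin: "finite (insert (m - 1) {d \<in> D. d < m})"
    using assms by simp
  have "M < m"
    unfolding M_def using fin by (subst Max_less_iff) auto
  moreover have "d \<le> M" if "d \<in> D" "d < m" for d
    unfolding M_def using fin that by (intro Max_ge) auto
  ultimately show ?thesis
    by (intro that[of "(M + m) / 2"]) fastforce+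
qed

lemma finite_gap_above:
  fixes D :: "real set"
  assumes "finite D"
  obtains b where "m < b" "\<And>d. d \<in> D \<Longrightarrow> m < d \<Longrightarrow> b < d"
proof -
  obtain a where "a < - m" "\<And>d. d \<in> uminus ` D \<Longrightarrow> d < - m \<Longrightarrow> d < a"
    using finite_gap_below[of "uminus ` D"] assms by blast
  then show ?thesis
    by (intro that[of "- a"]) force+
qed

lemma finite_Int_interval_eq_open_interval:
  fixes D J :: "real set"
  assumes D: "finite D" and J: "is_interval J"
  obtains a b where "a < b" "\<And>d. d \<in> D \<Longrightarrow> d \<in> J \<longleftrightarrow> a < d \<and> d < b"
proof (cases "D \<inter> J = {}")
  case True
  define a where "a = Max (insert 0 D)"
  have "d \<le> a" if "d \<in> D" for d
    unfolding a_def using D that by simp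
  then show ?thesis
    using True by (intro that[of a "a + 1"]) force+
next
  case False
  define lo where "lo = Min (D \<inter> J)"
  define hi where "hi = Max (D \<inter> J)"
  have ends: "lo \<in> D \<inter> J" "hi \<in> D \<inter> J"
    unfolding lo_def hi_def using D False Min_in[of "D \<inter> J"] Max_in[of "D \<inter> J"] by auto
  have bounds: "lo \<le> d" "d \<le> hi" if "d \<in> D \<inter> J" for d
    unfolding lo_def hi_def using D that by simp_all
  obtain a where a: "a < lo" "\<And>d. d \<in> D \<Longrightarrow> d < lo \<Longrightarrow> d < a"
    using finite_gap_below[OF D] by blast
  obtain b where b: "hi < b" "\<And>d. d \<in> D \<Longrightarrow> hi < d \<Longrightarrow> b < d"
    using finite_gap_above[OF D] by blast
  show ?thesis
  proof (rule that[of a b])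
    show "a < b"
      using a(1) b(1) bounds False by force
    fix d assume "d \<in> D"
    show "d \<in> J \<longleftrightarrow> a < d \<and> d < b"
    proof
      assume "d \<in> J"
      then show "a < d \<and> d < b"
        using bounds[of d] \<open>d \<in> D\<close> a(1) b(1) by force
    next
      assume "a < d \<and> d < b"
      then have "lo \<le> d" "d \<le> hi"
        using a(2) b(2) \<open>d \<in> D\<close> by force+
      then show "d \<in> J"
        using J ends unfolding is_interval_1 by blast
    qed
  qed
qed

lemma eventually_affine_onto_small_interval:
  fixes a b :: real
  assumes "a < b"
  shows "\<forall>\<^sub>F \<epsilon> in at_right 0. \<exists>\<alpha>>0. \<exists>c\<ge>0.
           \<forall>d. a < d \<and> d < b \<longleftrightarrow> \<alpha> * d + c \<in> {1<..<1 + \<epsilon>}"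
proof -
  have "0 < (b - a) / (\<bar>a\<bar> + 1)"
    using assms by simp
  then have "\<forall>\<^sub>F \<epsilon> in at_right 0. 0 < \<epsilon> \<and> \<epsilon> < (b - a) / (\<bar>a\<bar> + 1)"
    by (subst eventually_at_right) auto
  then show ?thesis
  proof (rule eventually_mono)
    fix \<epsilon> :: real
    assume \<epsilon>: "0 < \<epsilon> \<and> \<epsilon> < (b - a) / (\<bar>a\<bar> + 1)"
    define \<alpha> where "\<alpha> = \<epsilon> / (b - a)"
    have "\<alpha> > 0"
      unfolding \<alpha>_def using \<epsilon> assms by simp
    have "\<epsilon> * a \<le> \<epsilon> * (\<bar>a\<bar> + 1)"
      using \<epsilon> by (intro mult_left_mono) auto
    also have "\<dots> < b - a"
      using \<epsilon> by (simp add: pos_less_divide_eq)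
    finally have "1 - \<alpha> * a \<ge> 0"
      unfolding \<alpha>_def using assms by (simp add: divide_le_eq mult.commute)
    (* d \<mapsto> 1 + \<alpha> (d - a) sends a to 1 and b to 1 + \<epsilon> *)
    moreover have "\<forall>d. a < d \<and> d < b \<longleftrightarrow> \<alpha> * d + (1 - \<alpha> * a) \<in> {1<..<1 + \<epsilon>}"
    proof
      fix d
      have "\<alpha> * d + (1 - \<alpha> * a) = 1 + \<alpha> * (d - a)"
        by (simp add: algebra_simps)
      moreover have "\<alpha> * (b - a) = \<epsilon>"
        unfolding \<alpha>_def using assms by simp
      moreover have "0 < \<alpha> * (d - a) \<longleftrightarrow> a < d" "\<alpha> * (d - a) < \<alpha> * (b - a) \<longleftrightarrow> d < b"
        using \<open>\<alpha> > 0\<close> by (simp_all add: zero_less_mult_iff mult_less_cancel_left_pos)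
      ultimately show "a < d \<and> d < b \<longleftrightarrow> \<alpha> * d + (1 - \<alpha> * a) \<in> {1<..<1 + \<epsilon>}"
        unfolding greaterThanLessThan_iff by linarith
    qed
    ultimately show "\<exists>\<alpha>>0. \<exists>c\<ge>0. \<forall>d. a < d \<and> d < b \<longleftrightarrow> \<alpha> * d + c \<in> {1<..<1 + \<epsilon>}"
      using \<open>\<alpha> > 0\<close> by blast
  qed
qed

definition pcg_equiv :: "'a set \<Rightarrow> ('a + nat) wtree \<Rightarrow> real set \<Rightarrow> ('a + nat) wtree \<Rightarrow> real set \<Rightarrow> bool"
  where "pcg_equiv V T' J T I \<longleftrightarrow>
    (\<forall>u\<in>V. \<forall>v\<in>V. u \<noteq> v \<longrightarrow> (tdist T' (Inl u) (Inl v) \<in> J \<longleftrightarrow> tdist T (Inl u) (Inl v) \<in> I))"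

lemma eventually_reweight_onto_small_interval:
  assumes V: "finite V" and T: "tree_on_leaves V T" and J: "is_interval J"
  shows "\<forall>\<^sub>F \<epsilon> in at_right 0. \<exists>T'. tree_on_leaves V T' \<and> pcg_equiv V T' {1<..<1 + \<epsilon>} T J"
proof -
  define D where "D = (\<lambda>(u, v). tdist T (Inl u) (Inl v)) ` (V \<times> V)"
  have "finite D"
    unfolding D_def using V by simp
  then obtain a b where "a < b" and ab: "\<And>d. d \<in> D \<Longrightarrow> d \<in> J \<longleftrightarrow> a < d \<and> d < b"
    using finite_Int_interval_eq_open_interval J by blast
  have dist_in_D: "tdist T (Inl u) (Inl v) \<in> D" if "u \<in> V" "v \<in> V" for u v
    unfolding D_def using that by force
  have wtree: "is_wtree T" and leaves: "tleaves T = Inl ` V"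
    using T unfolding tree_on_leaves_def by auto
  show ?thesis
    using eventually_affine_onto_small_interval[OF \<open>a < b\<close>]
  proof (rule eventually_mono)
    fix \<epsilon> :: real
    assume "\<exists>\<alpha>>0. \<exists>c\<ge>0. \<forall>d. a < d \<and> d < b \<longleftrightarrow> \<alpha> * d + c \<in> {1<..<1 + \<epsilon>}"
    then obtain \<alpha> c where "\<alpha> > 0" "c \<ge> 0"
      and affine: "\<And>d. a < d \<and> d < b \<longleftrightarrow> \<alpha> * d + c \<in> {1<..<1 + \<epsilon>}"
      by blast
    let ?T' = "affine_reweight \<alpha> (c / 2) T"
    have "tree_on_leaves V ?T'"
      using wtree leaves \<open>\<alpha> > 0\<close> \<open>c \<ge> 0\<close>
      unfolding tree_on_leaves_def by (simp add: is_wtree_affine_reweight)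
    moreover have "pcg_equiv V ?T' {1<..<1 + \<epsilon>} T J"
      unfolding pcg_equiv_def
      using tdist_affine_reweight[OF wtree] leaves ab affine dist_in_D by simp
    ultimately show "\<exists>T'. tree_on_leaves V T' \<and> pcg_equiv V T' {1<..<1 + \<epsilon>} T J"
      by blast
  qed
qed

lemma obtain_common_interval:
  fixes T :: "nat \<Rightarrow> ('a + nat) wtree"
  assumes V: "finite V" and TI: "\<forall>i<k. tree_on_leaves V (T i) \<and> nonneg_interval (I i)"
  obtains T' J where "\<forall>i<k. tree_on_leaves V (T' i)" "nonneg_interval J"
    "\<forall>i<k. pcg_equiv V (T' i) J (T i) (I i)"
proof -
  have "\<forall>\<^sub>F \<epsilon> in at_right 0. \<forall>i\<in>{..<k}.
          \<exists>T'. tree_on_leaves V T' \<and> pcg_equiv V T' {1<..<1 + \<epsilon>} (T i) (I i)"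
    using TI V unfolding nonneg_interval_def
    by (intro eventually_ball_finite finite_lessThan ballI eventually_reweight_onto_small_interval)
      auto
  then obtain \<epsilon> :: real where
    "\<forall>i\<in>{..<k}. \<exists>T'. tree_on_leaves V T' \<and> pcg_equiv V T' {1<..<1 + \<epsilon>} (T i) (I i)"
    using eventually_happens'[OF trivial_limit_at_right_real] by blast
  from bchoice[OF this] obtain T' where
    "\<forall>i\<in>{..<k}. tree_on_leaves V (T' i) \<and> pcg_equiv V (T' i) {1<..<1 + \<epsilon>} (T i) (I i)"
    by blast
  moreover have "nonneg_interval {1<..<1 + \<epsilon>}"
    unfolding nonneg_interval_def by (auto simp: is_interval_oo)
  ultimately show ?thesis
    using that by blast
qed

lemma or_pcg_cong:
  assumes "\<forall>i<k. pcg_equiv V (T' i) (I' i) (T i) (I i)"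
  shows "or_pcg V k T' I' = or_pcg V k T I"
proof -
  have "(\<exists>i<k. tdist (T' i) (Inl u) (Inl v) \<in> I' i) \<longleftrightarrow> (\<exists>i<k. tdist (T i) (Inl u) (Inl v) \<in> I i)"
    if "u \<in> V" "v \<in> V" "u \<noteq> v" for u v
    using assms that unfolding pcg_equiv_def by blast
  then show ?thesis
    unfolding or_pcg_def by blast
qed

lemma and_pcg_cong:
  assumes "\<forall>i<k. pcg_equiv V (T' i) (I' i) (T i) (I i)"
  shows "and_pcg V k T' I' = and_pcg V k T I"
proof -
  have "(\<forall>i<k. tdist (T' i) (Inl u) (Inl v) \<in> I' i) \<longleftrightarrow> (\<forall>i<k. tdist (T i) (Inl u) (Inl v) \<in> I i)"
    if "u \<in> V" "v \<in> V" "u \<noteq> v" for u v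
    using assms that unfolding pcg_equiv_def by blast
  then show ?thesis
    unfolding and_pcg_def by blast
qed

lemma is_k_or_pcg_iff_common_interval:
  assumes "finite V"
  shows "is_k_or_pcg k V E \<longleftrightarrow>
           (\<exists>T I. (\<forall>i<k. tree_on_leaves V (T i)) \<and> nonneg_interval I \<and> E = or_pcg V k T (\<lambda>_. I))"
proof
  assume "is_k_or_pcg k V E"
  then obtain T I where TI: "\<forall>i<k. tree_on_leaves V (T i) \<and> nonneg_interval (I i)"
    and E: "E = or_pcg V k T I"
    unfolding is_k_or_pcg_def by blast
  obtain T' J where "\<forall>i<k. tree_on_leaves V (T' i)" "nonneg_interval J"
    and "\<forall>i<k. pcg_equiv V (T' i) J (T i) (I i)"
    using obtain_common_interval[OF assms TI] by blast
  moreover from this(3) have "or_pcg V k T' (\<lambda>_. J) = E"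
    unfolding E by (intro or_pcg_cong) simp
  ultimately show "\<exists>T I. (\<forall>i<k. tree_on_leaves V (T i)) \<and> nonneg_interval I \<and> E = or_pcg V k T (\<lambda>_. I)"
    by blast
next
  assume "\<exists>T I. (\<forall>i<k. tree_on_leaves V (T i)) \<and> nonneg_interval I \<and> E = or_pcg V k T (\<lambda>_. I)"
  then obtain T I where "\<forall>i<k. tree_on_leaves V (T i)" "nonneg_interval I" "E = or_pcg V k T (\<lambda>_. I)"
    by blast
  then show "is_k_or_pcg k V E"
    unfolding is_k_or_pcg_def by (intro exI[of _ T] exI[of _ "\<lambda>_. I"]) simp
qed

lemma is_k_and_pcg_iff_common_interval:
  assumes "finite V"
  shows "is_k_and_pcg k V E \<longleftrightarrow>
           (\<exists>T I. (\<forall>i<k. tree_on_leaves V (T i)) \<and> nonneg_interval I \<and> E = and_pcg V k T (\<lambda>_. I))"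
proof
  assume "is_k_and_pcg k V E"
  then obtain T I where TI: "\<forall>i<k. tree_on_leaves V (T i) \<and> nonneg_interval (I i)"
    and E: "E = and_pcg V k T I"
    unfolding is_k_and_pcg_def by blast
  obtain T' J where "\<forall>i<k. tree_on_leaves V (T' i)" "nonneg_interval J"
    and "\<forall>i<k. pcg_equiv V (T' i) J (T i) (I i)"
    using obtain_common_interval[OF assms TI] by blast
  moreover from this(3) have "and_pcg V k T' (\<lambda>_. J) = E"
    unfolding E by (intro and_pcg_cong) simp
  ultimately show "\<exists>T I. (\<forall>i<k. tree_on_leaves V (T i)) \<and> nonneg_interval I \<and> E = and_pcg V k T (\<lambda>_. I)"
    by blast
next
  assume "\<exists>T I. (\<forall>i<k. tree_on_leaves V (T i)) \<and> nonneg_interval I \<and> E = and_pcg V k T (\<lambda>_. I)"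
  then obtain T I where "\<forall>i<k. tree_on_leaves V (T i)" "nonneg_interval I" "E = and_pcg V k T (\<lambda>_. I)"
    by blast
  then show "is_k_and_pcg k V E"
    unfolding is_k_and_pcg_def by (intro exI[of _ T] exI[of _ "\<lambda>_. I"]) simp
qed

theorem theorem1:
  fixes k :: nat and V :: "'a set" and E :: "'a set set"
  assumes "k \<ge> 1"
    and "finite V"
    and "E \<subseteq> {{u, v} | u v. u \<in> V \<and> v \<in> V \<and> u \<noteq> v}"
  shows "(is_k_or_pcg k V E \<longleftrightarrow>
           (\<exists>T I. (\<forall>i<k. tree_on_leaves V (T i)) \<and> nonneg_interval I \<and>
              E = or_pcg V k T (\<lambda>_. I)))
       \<and> (is_k_and_pcg k V E \<longleftrightarrow>
           (\<exists>T I. (\<forall>i<k. tree_on_leaves V (T i)) \<and> nonneg_interval I \<and>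
              E = and_pcg V k T (\<lambda>_. I)))"
  using assms(2) by (intro conjI is_k_or_pcg_iff_common_interval is_k_and_pcg_iff_common_interval)

end
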